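(* Let $A\in\mathbf{R}^{n\times n}$, $B\in\mathbf{R}^{n\times p}$, $C\in\mathbf{R}^{q\times n}$, $K\in\mathbf{R}^{p\times n}$, $L\in\mathbf{R}^{n\times q}$. Let $\mathcal{G}\in\Gamma_N$ with row-stochastic matrix $\mathcal{D}$, and let $1,\lambda_2,\dots,\lambda_N$ be the eigenvalues of $\mathcal{D}$ (with multiplicity), where $1$ is simple and $|\lambda_i|<1$ for $i=2,\dots,N$. If $A+BK$ and $A+(1-\lambda_i)LC$, $i=2,\dots,N$, are all Schur stable, then the agents reach consensus under the observer-type protocol: for every initial condition $x_i(0),v_i(0)$, $\|x_i(k)-x_j(k)\|\to 0$ as $k\to\infty$ for all $i,j$.
   Context: Agents: $x_i(k+1)=Ax_i(k)+Bu_i(k)$, $y_i=Cx_i$, $i=1,\dots,N$. For a directed graph $\mathcal{G}$ on nodes $\{1,\dots,N\}$ (an edge $(j,i)$ means agent $i$ receives information from agent $j$), its row-stochastic matrix $\mathcal{D}=(d_{ij})\in\mathbf{R}^{N\times N}$ satisfies $d_{ii}>0$, $d_{ij}>0$ for $j\ne i$ iff $(j,i)$ is an edge and $d_{ij}=0$ otherwise, and $\sum_j d_{ij}=1$. $\Gamma_N$ is the set of directed graphs on $N$ nodes containing a directed spanning tree (a root node with a directed path to every other node). Protocol: $\zeta_i=\sum_{j=1}^N d_{ij}(y_i-y_j)$, $v_i(k+1)=(A+BK)v_i(k)+L\big(\sum_{j=1}^N d_{ij}C(v_i-v_j)-\zeta_i\big)$, $u_i=Kv_i$, with $v_i\in\mathbf{R}^n$.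 A matrix is Schur stable if all its eigenvalues have modulus $<1$. *)

theory Defs
  imports "HOL-Analysis.Analysis" "HOL-Computational_Algebra.Polynomial"
begin

definition cmat :: "real^'c^'r \<Rightarrow> complex^'c^'r" where
  "cmat M = (\<chi> i j. complex_of_real (M $ i $ j))"

definition schur_stable :: "complex^'n^'n \<Rightarrow> bool" where
  "schur_stable M \<longleftrightarrow> (\<forall>\<mu> v. v \<noteq> 0 \<and> M *v v = \<mu> *s v \<longrightarrow> cmod \<mu> < 1)"

definition charpoly :: "complex^'n^'n \<Rightarrow> complex poly" where
  "charpoly M = det (\<chi> i j. (if i = j then [:0, 1:] else 0) - [: M $ i $ j :])"

text \<open>D is the row-stochastic matrix of the directed graph with edge set E
  (an edge (j,i) means agent i receives information from agent j).\<close>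
definition row_stochastic_of :: "('N \<times> 'N) set \<Rightarrow> real^'N^'N \<Rightarrow> bool" where
  "row_stochastic_of E D \<longleftrightarrow>
     (\<forall>i. D $ i $ i > 0) \<and>
     (\<forall>i j. i \<noteq> j \<longrightarrow> (D $ i $ j > 0 \<longleftrightarrow> (j, i) \<in> E)) \<and>
     (\<forall>i j. i \<noteq> j \<longrightarrow> (j, i) \<notin> E \<longrightarrow> D $ i $ j = 0) \<and>
     (\<forall>i. (\<Sum>j\<in>UNIV. D $ i $ j) = 1)"

definition has_spanning_tree :: "('N \<times> 'N) set \<Rightarrow> bool" where
  "has_spanning_tree E \<longleftrightarrow> (\<exists>r. \<forall>i. (r, i) \<in> E\<^sup>*)"

end

theory Submission
  imports Defs "Jordan_Normal_Form.Schur_Decomposition" "Jordan_Normal_Form.Spectral_Radius"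
begin

(* Write e_i = v_i - x_i for the observer error of agent i.  Subtracting the two
   protocol equations and using that the rows of D sum to 1 gives the closed
   network dynamics  e_i(k+1) = A e_i + L C (e_i - sum_j d_ij e_j),  i.e. in stacked
   form  e(k+1) = (I (x) A + (I - D) (x) LC) e(k).  A Schur triangularisation
   D = P T Q (PQ = I, T upper triangular with diagonal 1, lam_2, ..., lam_N in this
   order) turns the mixed states f = (Q (x) I) e into a triangular cascade in which
   mode a >= 2 is driven by A + (1 - lam_a) LC plus inputs from higher modes; these
   modes decay one after another because a Schur stable system with vanishing input
   converges to zero.  Since D 1 = 1 and lam_a <> 1 for a >= 2, the first column of
   P is constant, so the disagreements e_i - e_j only involve the decaying modes.
   Finally x_i - x_j obeys  (A + BK)-dynamics driven by BK (e_i - e_j) -> 0. *)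

no_notation Matrix.vec_index (infixl "$" 100)

section \<open>From vectors indexed by a finite type to Jordan_Normal_Form matrices\<close>

text \<open>A fixed enumeration of a finite type identifies \<open>real^'n^'m\<close>-style matrices with
  the matrices of the Jordan_Normal_Form library, where Schur decomposition lives.\<close>

definition idx :: "nat \<Rightarrow> 'a::finite" where
  "idx = (SOME f. bij_betw f {0..<CARD('a)} (UNIV::'a set))"

lemma idx_bij: "bij_betw (idx::nat \<Rightarrow> 'a::finite) {0..<CARD('a)} UNIV"
  unfolding idx_def
  by (rule someI_ex[where P = "\<lambda>f. bij_betw f {0..<CARD('a)} UNIV"])
     (use ex_bij_betw_nat_finite[of "UNIV::'a set"] in simp)

definition unidx :: "'a::finite \<Rightarrow> nat" where
  "unidx = inv_into {0..<CARD('a)} idx"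

lemma unidx_less[simp]: "unidx (a::'a::finite) < CARD('a)"
  using idx_bij[where 'a='a] unfolding unidx_def
  by (metis atLeastLessThan_iff bij_betw_def inv_into_into iso_tuple_UNIV_I)

lemma idx_unidx[simp]: "idx (unidx (a::'a::finite)) = a"
  using idx_bij[where 'a='a] unfolding unidx_def
  by (meson bij_betw_inv_into_right iso_tuple_UNIV_I)

lemma unidx_idx[simp]: "i < CARD('a::finite) \<Longrightarrow> unidx (idx i :: 'a) = i"
  using idx_bij[where 'a='a] unfolding unidx_def
  by (simp add: bij_betw_inv_into_left)

lemma idx_inj: "i < CARD('a::finite) \<Longrightarrow> j < CARD('a) \<Longrightarrow> (idx i :: 'a) = idx j \<longleftrightarrow> i = j"
  by (metis unidx_idx)

lemma inj_on_idx: "inj_on (idx :: nat \<Rightarrow> 'a::finite) {0..<CARD('a)}"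
  using idx_bij bij_betw_def by blast

lemma sum_idx: "(\<Sum>a\<in>UNIV. g a) = (\<Sum>i=0..<CARD('a::finite). g (idx i :: 'a))"
  by (rule sum.reindex_bij_betw[symmetric, OF idx_bij])

lemma prod_idx: "(\<Prod>a\<in>UNIV. g a) = (\<Prod>i=0..<CARD('a::finite). g (idx i :: 'a))"
  by (rule prod.reindex_bij_betw[symmetric, OF idx_bij])

definition to_mat :: "'a::zero^'c::finite^'r::finite \<Rightarrow> 'a mat" where
  "to_mat M = Matrix.mat CARD('r) CARD('c) (\<lambda>(i,j). M $ idx i $ idx j)"

definition to_vec :: "'a::zero^'n::finite \<Rightarrow> 'a Matrix.vec" where
  "to_vec v = Matrix.vec CARD('n) (\<lambda>i. v $ idx i)"

definition of_vec :: "'a Matrix.vec \<Rightarrow> 'a^'n::finite" where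
  "of_vec w = (\<chi> j. vec_index w (unidx j))"

lemma to_mat_carrier[simp]: "to_mat (M::'a::zero^'c::finite^'r::finite) \<in> carrier_mat CARD('r) CARD('c)"
  unfolding to_mat_def by simp

lemma to_mat_dims[simp]: "dim_row (to_mat (M::'a::zero^'c::finite^'r::finite)) = CARD('r)"
   "dim_col (to_mat (M::'a::zero^'c::finite^'r::finite)) = CARD('c)"
  unfolding to_mat_def by simp_all

lemma to_mat_index[simp]: "i < CARD('r) \<Longrightarrow> j < CARD('c) \<Longrightarrow>
   to_mat (M::'a::zero^'c::finite^'r::finite) $$ (i,j) = M $ idx i $ idx j"
  unfolding to_mat_def by simp

lemma to_vec_carrier[simp]: "to_vec (v::'a::zero^'n::finite) \<in> carrier_vec CARD('n)"
  unfolding to_vec_def by simp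

lemma to_vec_dim[simp]: "dim_vec (to_vec (v::'a::zero^'n::finite)) = CARD('n)"
  unfolding to_vec_def by simp

lemma to_vec_index[simp]: "i < CARD('n) \<Longrightarrow> vec_index (to_vec (v::'a::zero^'n::finite)) i = v $ idx i"
  unfolding to_vec_def by simp

lemma of_to_vec[simp]: "of_vec (to_vec v) = (v::'a::zero^'n::finite)"
  unfolding of_vec_def by (simp add: vec_eq_iff)

lemma to_of_vec: "w \<in> carrier_vec CARD('n::finite) \<Longrightarrow> to_vec (of_vec w :: 'a::zero^'n) = w"
  unfolding of_vec_def by (auto simp: to_vec_def)

lemma to_vec_inj: "to_vec (v::'a::zero^'n::finite) = to_vec w \<longleftrightarrow> v = w"
  by (metis of_to_vec)

lemma to_vec_zero: "to_vec (0::'a::zero^'n::finite) = 0\<^sub>v CARD('n)"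
  by (auto simp: to_vec_def)

lemma to_mat_mult_vec: "to_vec ((M::'a::comm_semiring_1^'c::finite^'r::finite) *v v) = to_mat M *\<^sub>v to_vec v"
  by (rule eq_vecI) (auto simp: matrix_vector_mult_def scalar_prod_def sum_idx[where 'a='c] to_vec_def)

lemma to_vec_smult: "to_vec (c *s (v::'a::comm_semiring_1^'n::finite)) = c \<cdot>\<^sub>v to_vec v"
  by (rule eq_vecI) auto

lemma eigenvalue_to_mat_iff:
  "eigenvalue (to_mat (M::'a::comm_ring_1^'n::finite^'n)) \<mu> \<longleftrightarrow> (\<exists>v. v \<noteq> 0 \<and> M *v v = \<mu> *s v)"
proof
  assume "eigenvalue (to_mat M) \<mu>"
  then obtain w where w: "w \<in> carrier_vec CARD('n)" "w \<noteq> 0\<^sub>v CARD('n)" "to_mat M *\<^sub>v w = \<mu> \<cdot>\<^sub>v w"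
    unfolding eigenvalue_def eigenvector_def by auto
  define v :: "'a^'n" where "v = of_vec w"
  have tv: "to_vec v = w" unfolding v_def using w(1) by (rule to_of_vec)
  have "v \<noteq> 0" using tv w(2) to_vec_zero by metis
  moreover have "to_vec (M *v v) = to_vec (\<mu> *s v)"
    unfolding to_mat_mult_vec to_vec_smult tv using w(3) by simp
  ultimately show "\<exists>v. v \<noteq> 0 \<and> M *v v = \<mu> *s v" unfolding to_vec_inj by blast
next
  assume "\<exists>v. v \<noteq> 0 \<and> M *v v = \<mu> *s v"
  then obtain v where "v \<noteq> 0" "M *v v = \<mu> *s v" by blast
  then show "eigenvalue (to_mat M) \<mu>"
    unfolding eigenvalue_def eigenvector_def
    by (intro exI[of _ "to_vec v"])
       (auto simp: to_mat_mult_vec[symmetric] to_vec_smult[symmetric] to_vec_zero[symmetric] to_vec_inj)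
qed

lemma schur_stable_iff_eigenvalue:
  "schur_stable M \<longleftrightarrow> (\<forall>\<mu>. eigenvalue (to_mat M) \<mu> \<longrightarrow> cmod \<mu> < 1)"
  unfolding schur_stable_def eigenvalue_to_mat_iff by blast

lemma det_to_mat: "Determinant.det (to_mat (M::'a::comm_ring_1^'n::finite^'n)) = Determinants.det M"
proof -
  let ?n = "CARD('n)"
  let ?h = "map_permutation {0..<?n} (idx::nat\<Rightarrow>'n)"
  have bij: "bij_betw ?h {p. p permutes {0..<?n}} {p. p permutes (UNIV::'n set)}"
  proof (rule bij_betw_byWitness[where f'="map_permutation UNIV unidx"])
    show "\<forall>p\<in>{p. p permutes {0..<?n}}. map_permutation UNIV unidx (?h p) = p"
      by (auto intro!: map_permutation_compose_inv idx_bij)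
    have ub: "bij_betw (unidx::'n\<Rightarrow>nat) UNIV {0..<?n}"
      unfolding unidx_def by (rule bij_betw_inv_into[OF idx_bij])
    show "\<forall>p\<in>{p. p permutes (UNIV::'n set)}. ?h (map_permutation UNIV unidx p) = p"
      by (auto intro!: map_permutation_compose_inv ub)
    show "?h ` {p. p permutes {0..<?n}} \<subseteq> {p. p permutes UNIV}"
      using map_permutation_permutes[OF idx_bij] by auto
    show "map_permutation UNIV unidx ` {p. p permutes (UNIV::'n set)} \<subseteq> {p. p permutes {0..<?n}}"
      using map_permutation_permutes[OF ub] by auto
  qed
  have "Determinants.det M = (\<Sum>p\<in>{p. p permutes {0..<?n}}.
      of_int (sign (?h p)) * (\<Prod>i\<in>UNIV. M $ i $ ?h p i))"
    unfolding Determinants.det_def by (rule sum.reindex_bij_betw[symmetric, OF bij])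
  also have "\<dots> = (\<Sum>p\<in>{p. p permutes {0..<?n}}. signof p * (\<Prod>i=0..<?n. to_mat M $$ (i, p i)))"
  proof (rule sum.cong[OF refl])
    fix p assume p: "p \<in> {p. p permutes {0..<?n}}"
    hence pp: "p permutes {0..<?n}" by simp
    have "sign (?h p) = sign p" by (rule sign_map_permutation[OF inj_on_idx pp]) simp
    moreover have "(\<Prod>i\<in>UNIV. M $ i $ ?h p i) = (\<Prod>i=0..<?n. to_mat M $$ (i, p i))"
      unfolding prod_idx[where 'a='n]
    proof (rule prod.cong[OF refl])
      fix i assume i: "i \<in> {0..<?n}"
      have pi: "p i < ?n" using pp i by (simp add: permutes_in_image)
      have "?h p (idx i) = idx (p i)" by (rule map_permutation_apply[OF inj_on_idx i])
      thus "M $ idx i $ ?h p (idx i) = to_mat M $$ (i, p i)" using i pi by simp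
    qed
    ultimately show "of_int (sign (?h p)) * (\<Prod>i\<in>UNIV. M $ i $ ?h p i) =
       signof p * (\<Prod>i=0..<?n. to_mat M $$ (i, p i))" by simp
  qed
  also have "\<dots> = Determinant.det (to_mat M)"
    by (rule Determinant.det_def'[symmetric]) simp
  finally show ?thesis ..
qed

lemma charpoly_to_mat: "charpoly (M::complex^'n::finite^'n) = char_poly (to_mat M)"
proof -
  have e: "to_mat (\<chi> i j. (if i = j then [:0, 1:] else 0) - [: M $ i $ j :]) = char_poly_matrix (to_mat M)"
  proof (rule eq_matI)
    fix i j assume "i < dim_row (char_poly_matrix (to_mat M))" "j < dim_col (char_poly_matrix (to_mat M))"
    hence i: "i < CARD('n)" "j < CARD('n)" by (simp_all add: char_poly_matrix_def)
    have "(idx i :: 'n) = idx j \<longleftrightarrow> i = j" using i by (rule idx_inj)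
    thus "to_mat (\<chi> i j. (if i = j then [:0, 1:] else 0) - [: M $ i $ j :]) $$ (i, j) =
      char_poly_matrix (to_mat M) $$ (i, j)" using i by (simp add: char_poly_matrix_def)
  qed (simp_all add: char_poly_matrix_def)
  show ?thesis unfolding charpoly_def char_poly_def det_to_mat[symmetric] e ..
qed

lemma matrix_vector_sum: "M *v (\<Sum>j\<in>S. w j) = (\<Sum>j\<in>S. M *v w j)"
  by (induction S rule: infinite_finite_induct) (simp_all add: matrix_vector_right_distrib)

definition iter :: "'a::comm_semiring_1^'n::finite^'n \<Rightarrow> nat \<Rightarrow> 'a^'n \<Rightarrow> 'a^'n" where
  "iter M k = ((*v) M) ^^ k"

lemma iter_0[simp]: "iter M 0 w = w" by (simp add: iter_def)

lemma iter_Suc: "iter M (Suc k) w = iter M k (M *v w)"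
  unfolding iter_def funpow_Suc_right by simp

lemma iter_Suc': "iter M (Suc k) w = M *v iter M k w"
  by (simp add: iter_def)

lemma to_vec_iter: "to_vec (iter (M::'a::comm_semiring_1^'n::finite^'n) k w) = (to_mat M ^\<^sub>m k) *\<^sub>v to_vec w"
proof (induction k arbitrary: w)
  case 0
  show ?case by (simp add: one_mult_mat_vec[OF to_vec_carrier])
next
  case (Suc k)
  have "to_vec (iter M (Suc k) w) = (to_mat M ^\<^sub>m k) *\<^sub>v (to_mat M *\<^sub>v to_vec w)"
    by (simp add: iter_Suc Suc to_mat_mult_vec)
  also have "\<dots> = (to_mat M ^\<^sub>m k * to_mat M) *\<^sub>v to_vec w"
    by (rule assoc_mult_mat_vec[symmetric]) (auto intro: pow_carrier_mat)
  finally show ?case by simp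
qed

lemma mv_scaleR: "(M::complex^'n::finite^'m::finite) *v (c *\<^sub>R x) = c *\<^sub>R (M *v x)"
  by (simp add: Finite_Cartesian_Product.vec_eq_iff matrix_vector_mult_def scaleR_sum_right)

lemma scaleR_mv: "(c *\<^sub>R M) *v x = c *\<^sub>R ((M::complex^'n::finite^'m::finite) *v x)"
  by (simp add: Finite_Cartesian_Product.vec_eq_iff matrix_vector_mult_def scaleR_sum_right)

lemma iter_scaleR: "iter (t *\<^sub>R (M::complex^'n::finite^'n)) k w = t^k *\<^sub>R iter M k w"
  by (induction k) (simp_all add: iter_Suc' scaleR_mv mv_scaleR)

lemma variation_of_constants:
  fixes M :: "complex^'n::finite^'n"
  assumes rec: "\<And>k. z (Suc k) = M *v z k + u k"
  shows "z m = iter M m (z 0) + (\<Sum>l<m. iter M (m - Suc l) (u l))"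
proof (induction m)
  case (Suc m)
  have "z (Suc m) = M *v z m + u m" by (rule rec)
  also have "\<dots> = iter M (Suc m) (z 0) + (\<Sum>l<m. iter M (Suc (m - Suc l)) (u l)) + u m"
    unfolding Suc by (simp add: matrix_vector_right_distrib matrix_vector_sum iter_Suc')
  also have "(\<Sum>l<m. iter M (Suc (m - Suc l)) (u l)) = (\<Sum>l<m. iter M (Suc m - Suc l) (u l))"
    by (rule sum.cong) (auto simp: Suc_diff_Suc)
  finally show ?case by (simp add: add.assoc)
qed simp

section \<open>Geometric decay for Schur stable matrices\<close>

lemma bounded_powers_of_stable_spectrum:
  fixes A :: "complex mat"
  assumes A: "A \<in> carrier_mat n n" and stable: "\<And>\<mu>. eigenvalue A \<mu> \<Longrightarrow> cmod \<mu> < 1"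
  shows "\<exists>c. \<forall>k. norm_bound (A ^\<^sub>m k) c"
proof -
  obtain as where cA: "char_poly A = (\<Prod>a\<leftarrow>as. [:- a, 1:])"
    using char_poly_factorized[OF A] by blast
  have as_lt: "norm a < 1" if "a \<in> set as" for a
    using stable eigenvalue_root_char_poly[OF A] linear_poly_root[OF that] cA by simp
  have "\<exists>c1 c2. \<forall>k. norm_bound (A ^\<^sub>m k) (c1 + c2 * of_nat k ^ (0 - 1))"
    by (rule factored_char_poly_norm_bound[OF A cA jordan_nf_exists[OF A cA]])
       (auto dest: as_lt)
  then show ?thesis by auto
qed

lemma iter_bounded:
  fixes M :: "complex^'n::finite^'n"
  assumes "schur_stable M"
  shows "\<exists>c. \<forall>k w. norm (iter M k w) \<le> c * norm w"
proof -
  let ?n = "CARD('n)"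
  let ?A = "to_mat M"
  obtain c where "\<And>k. norm_bound (?A ^\<^sub>m k) c"
    using bounded_powers_of_stable_spectrum[OF to_mat_carrier] assms
    unfolding schur_stable_iff_eigenvalue by blast
  then have entry: "norm ((?A ^\<^sub>m k) $$ (i,j)) \<le> c" if "i < ?n" "j < ?n" for i j k
    using that pow_carrier_mat[OF to_mat_carrier, of M k] unfolding norm_bound_def by auto
  have comp: "cmod (iter M k w $ a) \<le> real ?n * c * norm w" for k w a
  proof -
    have i: "unidx a < ?n" "a = idx (unidx a)" by simp_all
    have "iter M k w $ a = (\<Sum>j=0..<?n. (?A ^\<^sub>m k) $$ (unidx a, j) * vec_index (to_vec w) j)"
      using to_vec_index[OF i(1), of "iter M k w"] pow_carrier_mat[OF to_mat_carrier, of M k]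
      by (simp add: to_vec_iter scalar_prod_def)
    then have "cmod (iter M k w $ a) \<le> (\<Sum>j=0..<?n. cmod ((?A ^\<^sub>m k) $$ (unidx a, j)) * cmod (w $ idx j))"
      using norm_sum[of "\<lambda>j. (?A ^\<^sub>m k) $$ (unidx a, j) * w $ idx j"] by (simp add: norm_mult)
    also have "\<dots> \<le> (\<Sum>j=0..<?n. c * norm w)"
      by (intro sum_mono mult_mono entry Finite_Cartesian_Product.norm_nth_le)
         (auto intro: order_trans[OF norm_ge_zero entry])
    finally show ?thesis by simp
  qed
  have "norm (iter M k w) \<le> (\<Sum>a\<in>UNIV. cmod (iter M k w $ a))" for k w
    unfolding norm_vec_def by (rule L2_set_le_sum) simp
  also have "\<dots> k w \<le> real ?n * (real ?n * c) * norm w" for k w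
    using sum_mono[of UNIV "\<lambda>a. cmod (iter M k w $ a)", OF comp] by simp
  finally show ?thesis by blast
qed

text \<open>A Schur stable matrix stays Schur stable after scaling by some factor \<open>t > 1\<close>,
  because it has only finitely many eigenvalues.\<close>
lemma schur_stable_scaleR_margin:
  fixes M :: "complex^'n::finite^'n"
  assumes stab: "schur_stable M"
  shows "\<exists>t>1. schur_stable (t *\<^sub>R M)"
proof -
  define S where "S = {\<mu>. \<exists>v. v \<noteq> 0 \<and> M *v v = \<mu> *s v}"
  have finS: "finite S"
    using card_finite_spectrum(1)[OF to_mat_carrier[of M]]
    unfolding S_def spectrum_def eigenvalue_to_mat_iff by simp
  define m where "m = Max (insert 0 (norm ` S))"
  have m0: "0 \<le> m" unfolding m_def using finS by simp
  have m1: "m < 1" unfolding m_def using finS stab by (subst Max_less_iff) (auto simp: S_def schur_stable_def)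
  have mS: "\<mu> \<in> S \<Longrightarrow> cmod \<mu> \<le> m" for \<mu> unfolding m_def using finS by (intro Max_ge) auto
  define t :: real where "t = 2 / (1 + m)"
  have t1: "1 < t" and tm: "t * m < 1" unfolding t_def using m0 m1 by (simp_all add: field_simps)
  have "cmod \<mu> < 1" if v: "v \<noteq> 0" "(t *\<^sub>R M) *v v = \<mu> *s v" for \<mu> v
  proof -
    have "M *v v = inverse t *\<^sub>R ((t *\<^sub>R M) *v v)" using t1 by (simp add: scaleR_mv)
    also have "\<dots> = (\<mu> / of_real t) *s v"
      unfolding v(2) by (simp add: Finite_Cartesian_Product.vec_eq_iff scaleR_conv_of_real[where 'a=complex] divide_inverse)
    finally have "\<mu> / of_real t \<in> S" unfolding S_def using v(1) by blast
    then have "cmod \<mu> \<le> t * m" using mS t1 by (fastforce simp: norm_divide field_simps)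
    then show ?thesis using tm by simp
  qed
  then show ?thesis using t1 unfolding schur_stable_def by blast
qed

lemma schur_decay:
  fixes M :: "complex^'n::finite^'n"
  assumes "schur_stable M"
  shows "\<exists>c \<rho>. 0 < \<rho> \<and> \<rho> < 1 \<and> (\<forall>k w. norm (iter M k w) \<le> c * \<rho>^k * norm w)"
proof -
  obtain t where t: "1 < t" "schur_stable (t *\<^sub>R M)"
    using schur_stable_scaleR_margin[OF assms] by blast
  obtain c where c: "\<And>k w. norm (iter (t *\<^sub>R M) k w) \<le> c * norm w"
    using iter_bounded[OF t(2)] by blast
  have "norm (iter M k w) \<le> c * (1/t)^k * norm w" for k w
  proof -
    have "iter M k w = (1/t)^k *\<^sub>R iter (t *\<^sub>R M) k w"
      using t(1) by (simp add: iter_scaleR power_mult_distrib[symmetric])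
    then have "norm (iter M k w) = (1/t)^k * norm (iter (t *\<^sub>R M) k w)" using t(1) by simp
    also have "\<dots> \<le> (1/t)^k * (c * norm w)" using c t(1) by (intro mult_left_mono) auto
    finally show ?thesis by (simp add: algebra_simps)
  qed
  then show ?thesis using t(1) by (intro exI[of _ c] exI[of _ "1/t"]) auto
qed

section \<open>Input-to-state stability\<close>

text \<open>Convolving a null sequence with a geometric sequence gives a null sequence
  (an instance of Tannery's theorem).\<close>
lemma geometric_convolution_tendsto_zero:
  fixes a :: "nat \<Rightarrow> real"
  assumes \<rho>: "0 \<le> \<rho>" "\<rho> < 1" and a: "a \<longlonglongrightarrow> 0"
  shows "(\<lambda>m. \<Sum>l<m. \<rho>^(m - Suc l) * a l) \<longlonglongrightarrow> 0"
proof -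
  define f where "f j m = (if j < m then \<rho>^j * a (m - Suc j) else 0)" for j m
  obtain B where B: "\<And>l. norm (a l) \<le> B"
    using convergent_imp_Bseq[OF convergentI[OF a]] by (auto simp: Bseq_def)
  have sum_eq: "(\<Sum>l<m. \<rho>^(m - Suc l) * a l) = (\<Sum>j. f j m)" for m
  proof -
    have "(\<Sum>l<m. \<rho>^(m - Suc l) * a l) = (\<Sum>j<m. \<rho>^(m - Suc (m - Suc j)) * a (m - Suc j))"
      by (rule sum.nat_diff_reindex[symmetric])
    also have "\<dots> = (\<Sum>j<m. f j m)" by (rule sum.cong) (auto simp: f_def Suc_diff_Suc)
    also have "\<dots> = (\<Sum>j. f j m)" by (rule suminf_finite[symmetric]) (auto simp: f_def)
    finally show ?thesis .
  qed
  have "(\<lambda>m. f j m) \<longlonglongrightarrow> 0" for j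
  proof (rule LIMSEQ_offset[where k = "Suc j"])
    show "(\<lambda>m. f j (m + Suc j)) \<longlonglongrightarrow> 0"
      unfolding f_def by (simp add: tendsto_mult_right_zero[OF a])
  qed
  moreover have "eventually (\<lambda>(j, m). norm (f j m) \<le> B * \<rho>^j) (at_top \<times>\<^sub>F sequentially)"
    using B \<rho> order_trans[OF norm_ge_zero B]
    by (intro always_eventually) (auto simp: f_def abs_mult mult.commute[of B] intro!: mult_left_mono)
  moreover have "summable (\<lambda>j. B * \<rho>^j)" using \<rho> by (intro summable_mult summable_geometric) simp
  ultimately have "(\<lambda>m. \<Sum>j. f j m) \<longlonglongrightarrow> (\<Sum>j. 0)"
    using tannerys_theorem[of f "\<lambda>_. 0" sequentially "\<lambda>j. B * \<rho>^j"] by auto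
  then show ?thesis unfolding sum_eq by simp
qed

lemma stable_system_converges:
  fixes M :: "complex^'n::finite^'n"
  assumes stab: "schur_stable M"
    and rec: "\<And>k. z (Suc k) = M *v z k + u k"
    and u: "u \<longlonglongrightarrow> 0"
  shows "z \<longlonglongrightarrow> 0"
proof -
  obtain c \<rho> where \<rho>: "0 < \<rho>" "\<rho> < 1" and decay: "\<And>k w. norm (iter M k w) \<le> c * \<rho>^k * norm w"
    using schur_decay[OF stab] by blast
  define g where "g m = c * \<rho>^m * norm (z 0) + c * (\<Sum>l<m. \<rho>^(m - Suc l) * norm (u l))" for m
  have bound: "norm (z m) \<le> g m" for m
  proof -
    have "norm (z m) \<le> norm (iter M m (z 0)) + (\<Sum>l<m. norm (iter M (m - Suc l) (u l)))"
      unfolding variation_of_constants[of z M u m, OF rec]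
      by (rule order_trans[OF norm_triangle_ineq add_left_mono[OF norm_sum]])
    also have "\<dots> \<le> c * \<rho>^m * norm (z 0) + (\<Sum>l<m. c * \<rho>^(m - Suc l) * norm (u l))"
      by (intro add_mono sum_mono decay)
    finally show ?thesis by (simp add: g_def sum_distrib_left mult.assoc)
  qed
  have "(\<lambda>m. c * \<rho>^m * norm (z 0)) \<longlonglongrightarrow> 0"
    using \<rho> by (intro tendsto_mult_left_zero tendsto_mult_right_zero LIMSEQ_power_zero) auto
  moreover have "(\<lambda>m. c * (\<Sum>l<m. \<rho>^(m - Suc l) * norm (u l))) \<longlonglongrightarrow> 0"
    using \<rho> by (intro tendsto_mult_right_zero geometric_convolution_tendsto_zero tendsto_norm_zero u) auto
  ultimately have "g \<longlonglongrightarrow> 0" unfolding g_def by (rule tendsto_add_zero)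
  moreover have "eventually (\<lambda>m. norm (z m) \<le> g m) sequentially"
    using bound by (simp add: always_eventually)
  ultimately show ?thesis by (rule Lim_null_comparison[rotated])
qed

lemma lim_mv: "g \<longlonglongrightarrow> 0 \<Longrightarrow> (\<lambda>k. (M::complex^'n::finite^'m::finite) *v g k) \<longlonglongrightarrow> 0"
  by (rule bounded_linear.tendsto_zero[OF matrix_vector_mul_bounded_linear])

lemma lim_smult: "g \<longlonglongrightarrow> 0 \<Longrightarrow> (\<lambda>k. c *s (g k :: complex^'n::finite)) \<longlonglongrightarrow> 0"
proof -
  have "linear (\<lambda>x::complex^'n. c *s x)"
    by (rule linearI) (simp_all add: vector_add_ldistrib Finite_Cartesian_Product.vec_eq_iff
        scaleR_conv_of_real[where 'a=complex] mult.left_commute)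
  then show "g \<longlonglongrightarrow> 0 \<Longrightarrow> (\<lambda>k. c *s g k) \<longlonglongrightarrow> 0"
    using bounded_linear.tendsto_zero linear_conv_bounded_linear by blast
qed

lemma cascade_converges:
  fixes f :: "nat \<Rightarrow> nat \<Rightarrow> complex^'n::finite" and T :: "complex mat"
    and Mf :: "nat \<Rightarrow> complex^'n^'n" and G :: "complex^'n^'n"
  assumes rec: "\<And>k a. 1 \<le> a \<Longrightarrow> a < n \<Longrightarrow>
      f (Suc k) a = Mf a *v f k a - G *v (\<Sum>c\<in>{a<..<n}. T $$ (a,c) *s f k c)"
    and stab: "\<And>a. 1 \<le> a \<Longrightarrow> a < n \<Longrightarrow> schur_stable (Mf a)"
  shows "1 \<le> a \<Longrightarrow> a < n \<Longrightarrow> (\<lambda>k. f k a) \<longlonglongrightarrow> 0"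
proof (induction "n - a" arbitrary: a rule: less_induct)
  case less
  have rec_a: "f (Suc k) a = Mf a *v f k a + - (G *v (\<Sum>c\<in>{a<..<n}. T $$ (a,c) *s f k c))" for k
    using rec[OF less(2,3)] by simp
  have "(\<lambda>k. f k c) \<longlonglongrightarrow> 0" if "c \<in> {a<..<n}" for c
    using less that by auto
  then have "(\<lambda>k. \<Sum>c\<in>{a<..<n}. T $$ (a,c) *s f k c) \<longlonglongrightarrow> 0"
    by (intro tendsto_null_sum lim_smult)
  then have "(\<lambda>k. - (G *v (\<Sum>c\<in>{a<..<n}. T $$ (a,c) *s f k c))) \<longlonglongrightarrow> 0"
    using lim_mv tendsto_minus by fastforce
  then show ?case
    by (rule stable_system_converges[where z = "\<lambda>k. f k a", OF stab[OF less(2,3)] rec_a])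
qed

section \<open>Matrices acting blockwise on families of vectors\<close>

text \<open>\<open>block_mult X y\<close> is \<open>(X \<otimes> I) y\<close>: the scalar matrix \<open>X\<close> mixes the vectors \<open>y j\<close>,
  \<open>j < dim_col X\<close>, of a stacked state.\<close>
definition block_mult :: "'a::comm_semiring_1 mat \<Rightarrow> (nat \<Rightarrow> 'a^'m::finite) \<Rightarrow> nat \<Rightarrow> 'a^'m" where
  "block_mult X y i = (\<Sum>j=0..<dim_col X. X $$ (i,j) *s y j)"

lemma smult_sum_left: "(\<Sum>i\<in>S. c i) *s (x::'a::comm_semiring_1^'n::finite) = (\<Sum>i\<in>S. c i *s x)"
  by (induction S rule: infinite_finite_induct) (simp_all add: vector_sadd_rdistrib)

lemma smult_sum_right: "c *s (\<Sum>i\<in>S. x i) = (\<Sum>i\<in>S. c *s (x i :: 'a::comm_semiring_1^'n::finite))"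
  by (induction S rule: infinite_finite_induct) (simp_all add: vector_add_ldistrib)

lemma block_mult_cong:
  "(\<And>j. j < dim_col X \<Longrightarrow> y j = z j) \<Longrightarrow> block_mult X y i = block_mult X z i"
  unfolding block_mult_def by (intro sum.cong) auto

lemma block_mult_mult:
  assumes "X \<in> carrier_mat n k" "Y \<in> carrier_mat k l" "i < n"
  shows "block_mult (X * Y) y i = block_mult X (block_mult Y y) i"
proof -
  have "block_mult X (block_mult Y y) i = (\<Sum>b=0..<l. (\<Sum>j=0..<k. X $$ (i,j) * Y $$ (j,b)) *s y b)"
    using assms unfolding block_mult_def
    by (simp add: smult_sum_right smult_sum_left vector_smult_assoc) (rule sum.swap)
  also have "\<dots> = block_mult (X * Y) y i"
    using assms unfolding block_mult_def by (intro sum.cong) (auto simp: scalar_prod_def)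
  finally show ?thesis ..
qed

lemma block_mult_one: "i < n \<Longrightarrow> block_mult (1\<^sub>m n) y i = y i"
  unfolding block_mult_def by (simp add: if_distrib[of "\<lambda>c. c *s _"] cong: if_cong)

lemma block_mult_affine:
  fixes M N :: "'a::field^'m::finite^'m"
  shows "block_mult X (\<lambda>j. M *v y j + N *v (y j - z j)) i
     = M *v block_mult X y i + N *v (block_mult X y i - block_mult X z i)"
  unfolding block_mult_def
  by (simp add: vector_add_ldistrib vector_ssub_ldistrib vector_scalar_commute sum.distrib sum_subtractf
      matrix_vector_right_distrib matrix_vector_mult_diff_distrib matrix_vector_sum)

lemma sum_split_at:
  assumes "a < (n::nat)" "\<And>c. c < a \<Longrightarrow> g c = 0"
  shows "(\<Sum>c=0..<n. g c) = g a + (\<Sum>c\<in>{a<..<n}. g c)"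
proof -
  have "(\<Sum>c=0..<n. g c) = (\<Sum>c=0..<a. g c) + (\<Sum>c=a..<n. g c)"
    using assms(1) by (simp add: sum.atLeastLessThan_concat)
  also have "(\<Sum>c=0..<a. g c) = 0" using assms(2) by (intro sum.neutral) auto
  also have "(\<Sum>c=a..<n. g c) = g a + (\<Sum>c=Suc a..<n. g c)"
    using assms(1) by (rule sum.atLeast_Suc_lessThan)
  finally show ?thesis by (simp add: atLeastSucLessThan_greaterThanLessThan)
qed

lemma block_mult_upper_triangular:
  assumes "T \<in> carrier_mat n n" "upper_triangular T" "a < n"
  shows "block_mult T y a = T $$ (a,a) *s y a + (\<Sum>c\<in>{a<..<n}. T $$ (a,c) *s y c)"
  unfolding block_mult_def using assms
  by (subst sum_split_at[of a]) (auto simp: upper_triangular_def)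

lemma scaled_mat_mv: "(\<chi> p q. c * (G::'a::comm_semiring_1^'n::finite^'m::finite) $ p $ q) *v w = c *s (G *v w)"
  by (simp add: Finite_Cartesian_Product.vec_eq_iff matrix_vector_mult_def sum_distrib_left mult.assoc)

section \<open>Schur triangularisation of the interaction matrix\<close>

lemma upper_triangular_fixed_vector:
  assumes T: "T \<in> carrier_mat n n" "upper_triangular T" and q: "q \<in> carrier_vec n" "T *\<^sub>v q = q"
    and diag: "\<And>i. 1 \<le> i \<Longrightarrow> i < n \<Longrightarrow> T $$ (i,i) \<noteq> (1::'a::field)"
  shows "1 \<le> i \<Longrightarrow> i < n \<Longrightarrow> vec_index q i = 0"
proof (induction "n - i" arbitrary: i rule: less_induct)
  case less
  have "vec_index (T *\<^sub>v q) i = vec_index q i" using q(2) by simp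
  then have "(\<Sum>j=0..<n. T $$ (i,j) * vec_index q j) = vec_index q i"
    using less(3) T(1) q(1) by (simp add: scalar_prod_def)
  then have "vec_index q i = (\<Sum>j=0..<n. T $$ (i,j) * vec_index q j)" ..
  also have "\<dots> = T $$ (i,i) * vec_index q i + (\<Sum>j\<in>{i<..<n}. T $$ (i,j) * vec_index q j)"
    by (rule sum_split_at) (use less T in auto)
  also have "(\<Sum>j\<in>{i<..<n}. T $$ (i,j) * vec_index q j) = 0"
    by (rule sum.neutral) (use less in auto)
  finally have "(T $$ (i,i) - 1) * vec_index q i = 0" by (simp add: algebra_simps)
  then show ?case using diag[OF less(2,3)] by simp
qed

text \<open>If \<open>D = P T Q\<close> with \<open>PQ = I\<close>, \<open>T\<close> upper triangular, \<open>D 1 = 1\<close> and the eigenvalue 1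
  appears on the diagonal of \<open>T\<close> only in the first position, then \<open>Q 1\<close> is a multiple of
  the first unit vector, so the first column of \<open>P\<close> is constant.\<close>
lemma first_column_constant:
  fixes Dm :: "'a::field mat"
  assumes carr: "Dm \<in> carrier_mat n n" "P \<in> carrier_mat n n" "Q \<in> carrier_mat n n" "T \<in> carrier_mat n n"
    and PQ: "P * Q = 1\<^sub>m n" and QD: "Q * Dm = T * Q" and ut: "upper_triangular T"
    and diag: "\<And>i. 1 \<le> i \<Longrightarrow> i < n \<Longrightarrow> T $$ (i,i) \<noteq> 1"
    and rows: "\<And>i. i < n \<Longrightarrow> (\<Sum>j=0..<n. Dm $$ (i,j)) = 1"
    and ij: "i < n" "j < n"
  shows "P $$ (i,0) = P $$ (j,0)"
proof -
  define one :: "'a Matrix.vec" where "one = Matrix.vec n (\<lambda>_. 1)"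
  have one: "one \<in> carrier_vec n" unfolding one_def by simp
  have "Dm *\<^sub>v one = one"
    using carr rows by (intro eq_vecI) (auto simp: one_def scalar_prod_def)
  define q where "q = Q *\<^sub>v one"
  have q: "q \<in> carrier_vec n" unfolding q_def using carr one by simp
  have "T *\<^sub>v q = (Q * Dm) *\<^sub>v one"
    unfolding q_def QD using carr one by (simp add: assoc_mult_mat_vec)
  also have "\<dots> = q"
    unfolding q_def using carr one \<open>Dm *\<^sub>v one = one\<close> by (simp add: assoc_mult_mat_vec)
  finally have q0: "vec_index q a = 0" if "1 \<le> a" "a < n" for a
    using upper_triangular_fixed_vector[OF carr(4) ut q _ diag] that by blast
  have "P *\<^sub>v q = one"
    unfolding q_def using carr one by (simp add: assoc_mult_mat_vec[symmetric] PQ)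
  then have Pq: "P $$ (b,0) * vec_index q 0 = 1" if "b < n" for b
  proof -
    have "(\<Sum>a=0..<n. P $$ (b,a) * vec_index q a) = 1"
      using arg_cong[OF \<open>P *\<^sub>v q = one\<close>, of "\<lambda>w. vec_index w b"] that carr q
      by (simp add: one_def scalar_prod_def)
    moreover have "(\<Sum>a=0..<n. P $$ (b,a) * vec_index q a) = P $$ (b,0) * vec_index q 0"
      using that by (subst sum_split_at[of 0]) (auto simp: q0)
    ultimately show ?thesis by simp
  qed
  then show ?thesis using Pq[OF ij(1)] Pq[OF ij(2)] by (metis mult_cancel_right mult_zero_left zero_neq_one)
qed

text \<open>In the Schur coordinates \<open>f = (Q \<otimes> I) y\<close> the network dynamics
  \<open>y_b(k+1) = A y_b + G (y_b - \<Sum>_j D_bj y_j)\<close> become triangular: mode \<open>a\<close> evolves by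
  \<open>A + (1 - T_aa) G\<close> and is driven only by the modes \<open>c > a\<close>.\<close>
lemma triangular_modes_dynamics:
  fixes y :: "nat \<Rightarrow> nat \<Rightarrow> complex^'m::finite"
  assumes carr: "Dm \<in> carrier_mat n n" "Q \<in> carrier_mat n n" "T \<in> carrier_mat n n"
    and QD: "Q * Dm = T * Q" and ut: "upper_triangular T"
    and rec: "\<And>b. b < n \<Longrightarrow> y (Suc k) b = Ac *v y k b + G *v (y k b - block_mult Dm (y k) b)"
    and a: "a < n"
  shows "block_mult Q (y (Suc k)) a
    = (Ac + (\<chi> p q. (1 - T $$ (a,a)) * G $ p $ q)) *v block_mult Q (y k) a
      - G *v (\<Sum>c\<in>{a<..<n}. T $$ (a,c) *s block_mult Q (y k) c)"
proof -
  let ?f = "block_mult Q (y k)"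
  have "block_mult Q (block_mult Dm (y k)) a = block_mult T ?f a"
    using carr a by (simp add: block_mult_mult[symmetric] QD)
  also have "\<dots> = T $$ (a,a) *s ?f a + (\<Sum>c\<in>{a<..<n}. T $$ (a,c) *s ?f c)"
    by (rule block_mult_upper_triangular[OF carr(3) ut a])
  finally have mix: "block_mult Q (block_mult Dm (y k)) a = \<dots>" .
  have "block_mult Q (y (Suc k)) a = block_mult Q (\<lambda>b. Ac *v y k b + G *v (y k b - block_mult Dm (y k) b)) a"
    using carr by (intro block_mult_cong) (simp add: rec)
  also have "\<dots> = Ac *v ?f a + G *v (?f a - block_mult Q (block_mult Dm (y k)) a)"
    by (rule block_mult_affine)
  moreover have "(Ac + (\<chi> p q. (1 - T $$ (a,a)) * G $ p $ q)) *v ?f a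
      = Ac *v ?f a + (1 - T $$ (a,a)) *s (G *v ?f a)"
    by (simp add: matrix_vector_mult_add_rdistrib scaled_mat_mv)
  ultimately show ?thesis unfolding mix
    by (simp add: matrix_vector_mult_diff_distrib matrix_vector_right_distrib vector_scalar_commute)
qed

section \<open>Synchronisation of the coupled observer errors\<close>

lemma schur_triangularisation:
  fixes Dm :: "complex mat"
  assumes Dm: "Dm \<in> carrier_mat n n" and cp: "char_poly Dm = (\<Prod>a\<leftarrow>mus. [:- a, 1:])"
  obtains T P Q where "T \<in> carrier_mat n n" "P \<in> carrier_mat n n" "Q \<in> carrier_mat n n"
    "P * Q = 1\<^sub>m n" "Q * Dm = T * Q" "upper_triangular T" "\<And>a. a < n \<Longrightarrow> T $$ (a,a) = mus ! a"
proof -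
  obtain T P Q where sd: "schur_decomposition Dm mus = (T, P, Q)"
    by (cases "schur_decomposition Dm mus") auto
  note schur = schur_decomposition[OF Dm cp sd]
  have carr: "T \<in> carrier_mat n n" "P \<in> carrier_mat n n" "Q \<in> carrier_mat n n"
    and PQ: "P * Q = 1\<^sub>m n" and QP: "Q * P = 1\<^sub>m n" and DPTQ: "Dm = P * T * Q"
    using schur Dm unfolding similar_mat_wit_def Let_def by auto
  have diag: "T $$ (a,a) = mus ! a" if "a < n" for a
  proof -
    have "diag_mat T ! a = mus ! a" using schur by simp
    then show ?thesis using carr(1) that by (simp add: diag_mat_def)
  qed
  have "Q * Dm = (Q * P) * (T * Q)"
    unfolding DPTQ using carr by (simp add: assoc_mult_mat[of _ n n _ n _ n])
  then have QD: "Q * Dm = T * Q" using carr by (simp add: QP)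
  show ?thesis by (rule that[OF carr PQ QD _ diag]) (use schur in simp)
qed

lemma network_states_synchronise:
  fixes y :: "nat \<Rightarrow> nat \<Rightarrow> complex^'m::finite" and Dm :: "complex mat"
  assumes Dm: "Dm \<in> carrier_mat n n" and cp: "char_poly Dm = (\<Prod>a\<leftarrow>mus. [:- a, 1:])"
    and modes: "\<And>a. 1 \<le> a \<Longrightarrow> a < n \<Longrightarrow>
        mus ! a \<noteq> 1 \<and> schur_stable (Ac + (\<chi> p q. (1 - mus ! a) * G $ p $ q))"
    and rows: "\<And>i. i < n \<Longrightarrow> (\<Sum>j=0..<n. Dm $$ (i,j)) = 1"
    and rec: "\<And>k b. b < n \<Longrightarrow> y (Suc k) b = Ac *v y k b + G *v (y k b - block_mult Dm (y k) b)"
    and ij: "i < n" "j < n"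
  shows "(\<lambda>k. y k i - y k j) \<longlonglongrightarrow> 0"
proof -
  obtain T P Q where carr: "T \<in> carrier_mat n n" "P \<in> carrier_mat n n" "Q \<in> carrier_mat n n"
    and PQ: "P * Q = 1\<^sub>m n" and QD: "Q * Dm = T * Q" and ut: "upper_triangular T"
    and diag: "\<And>a. a < n \<Longrightarrow> T $$ (a,a) = mus ! a"
    using schur_triangularisation[OF Dm cp] by blast
  define f where "f k = block_mult Q (y k)" for k
  have modes_vanish: "(\<lambda>k. f k a) \<longlonglongrightarrow> 0" if "1 \<le> a" "a < n" for a
  proof (rule cascade_converges[of n f _ G T, OF _ _ that])
    show "f (Suc k) a = (Ac + (\<chi> p q. (1 - mus ! a) * G $ p $ q)) *v f k a
        - G *v (\<Sum>c\<in>{a<..<n}. T $$ (a,c) *s f k c)" if "1 \<le> a" "a < n" for k a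
      unfolding f_def using triangular_modes_dynamics[where y = y and k = k, OF Dm carr(3,1) QD ut rec] that diag by simp
  qed (use modes in blast)
  have recover: "y k b = block_mult P (f k) b" if "b < n" for k b
    using that carr by (simp add: f_def block_mult_mult[symmetric] PQ block_mult_one)
  have const: "P $$ (i,0) = P $$ (j,0)"
    by (rule first_column_constant[OF Dm carr(2,3,1) PQ QD ut _ rows ij]) (use diag modes in auto)
  have disagreement: "y k i - y k j = (\<Sum>a\<in>{0<..<n}. (P $$ (i,a) - P $$ (j,a)) *s f k a)" for k
  proof -
    have "y k i - y k j = (\<Sum>a=0..<n. (P $$ (i,a) - P $$ (j,a)) *s f k a)"
      using carr ij unfolding recover[OF ij(1)] recover[OF ij(2)] block_mult_def
      by (simp add: sum_subtractf vector_sub_rdistrib)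
    also have "\<dots> = (\<Sum>a\<in>{0<..<n}. (P $$ (i,a) - P $$ (j,a)) *s f k a)"
      using ij const by (subst sum_split_at[of 0]) auto
    finally show ?thesis .
  qed
  have "(\<lambda>k. \<Sum>a\<in>{0<..<n}. (P $$ (i,a) - P $$ (j,a)) *s f k a) \<longlonglongrightarrow> 0"
    by (intro tendsto_null_sum lim_smult modes_vanish) auto
  then show ?thesis unfolding disagreement .
qed

text \<open>The same statement for agents indexed by a finite type, with eigenvalues \<open>lam i\<close>
  different from 1 for \<open>i \<noteq> r\<close>; enumerating the agents with \<open>r\<close> first reduces it to the
  lemma above.\<close>
lemma coupled_errors_synchronise:
  fixes e :: "nat \<Rightarrow> 'N::finite \<Rightarrow> complex^'m::finite" and Dc :: "complex^'N^'N"
    and lam :: "'N \<Rightarrow> complex"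
  assumes rows: "\<And>i. (\<Sum>j\<in>UNIV. Dc $ i $ j) = 1"
    and cp: "charpoly Dc = (\<Prod>i\<in>UNIV. [: - lam i, 1 :])"
    and modes: "\<And>i. i \<noteq> r \<Longrightarrow> lam i \<noteq> 1 \<and> schur_stable (Ac + (\<chi> a b. (1 - lam i) * G $ a $ b))"
    and rec: "\<And>k i. e (Suc k) i = Ac *v e k i + G *v (e k i - (\<Sum>j\<in>UNIV. Dc $ i $ j *s e k j))"
  shows "(\<lambda>k. e k i - e k j) \<longlonglongrightarrow> 0"
proof -
  let ?n = "CARD('N)"
  obtain ys where ys: "set ys = UNIV - {r}" "distinct ys"
    using finite_distinct_list[of "UNIV - {r}"] by auto
  define xs where "xs = r # ys"
  have xs: "set xs = UNIV" "distinct xs" unfolding xs_def using ys by auto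
  have len: "length xs = ?n" using distinct_card[OF xs(2)] xs(1) by simp
  have "char_poly (to_mat Dc) = (\<Prod>i\<in>set xs. [: - lam i, 1 :])"
    unfolding charpoly_to_mat[symmetric] xs(1) by (rule cp)
  also have "\<dots> = (\<Prod>a\<leftarrow>map lam xs. [:- a, 1:])"
    by (simp add: prod.distinct_set_conv_list[OF xs(2)] o_def)
  finally have cp': "char_poly (to_mat Dc) = \<dots>" .
  have others: "xs ! a \<noteq> r" if "1 \<le> a" "a < ?n" for a
  proof -
    have "a - 1 < length ys" using that len unfolding xs_def by simp
    then have "ys ! (a - 1) \<in> UNIV - {r}" unfolding ys(1)[symmetric] by (rule nth_mem)
    then show ?thesis using that unfolding xs_def by (simp add: nth_Cons')
  qed
  have rows': "(\<Sum>j=0..<?n. to_mat Dc $$ (b,j)) = 1" if "b < ?n" for b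
    using rows[of "idx b"] that by (simp add: sum_idx[where 'a='N])
  have rec': "e (Suc k) (idx b) = Ac *v e k (idx b)
      + G *v (e k (idx b) - block_mult (to_mat Dc) (\<lambda>c. e k (idx c)) b)" if "b < ?n" for k b
    using rec[of k "idx b"] that by (simp add: block_mult_def sum_idx[where 'a='N])
  have "(\<lambda>k. e k (idx (unidx i)) - e k (idx (unidx j))) \<longlonglongrightarrow> 0"
    by (rule network_states_synchronise[where y = "\<lambda>k b. e k (idx b)", OF to_mat_carrier cp' _ rows' rec'])
       (use len others modes in \<open>auto simp: xs_def\<close>)
  then show ?thesis by simp
qed

section \<open>The observer-type protocol\<close>

definition cvec :: "real^'n::finite \<Rightarrow> complex^'n" where
  "cvec w = (\<chi> a. complex_of_real (w $ a))"

lemma cvec_add: "cvec (a + b) = cvec a + cvec b"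
  by (simp add: cvec_def Finite_Cartesian_Product.vec_eq_iff)

lemma cvec_diff: "cvec (a - b) = cvec a - cvec b"
  by (simp add: cvec_def Finite_Cartesian_Product.vec_eq_iff)

lemma cvec_sum: "cvec (\<Sum>i\<in>S. g i) = (\<Sum>i\<in>S. cvec (g i))"
  by (simp add: cvec_def Finite_Cartesian_Product.vec_eq_iff sum_component)

lemma cvec_scaleR: "cvec (r *\<^sub>R w) = complex_of_real r *s cvec w"
  by (simp add: cvec_def Finite_Cartesian_Product.vec_eq_iff)

lemma cvec_mv: "cvec ((M::real^'n::finite^'m::finite) *v w) = cmat M *v cvec w"
  by (simp add: cvec_def cmat_def Finite_Cartesian_Product.vec_eq_iff matrix_vector_mult_def)

lemma norm_cvec: "norm (cvec w) = norm w"
  by (simp add: cvec_def norm_vec_def)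

lemma observer_error_dynamics:
  fixes A :: "real^'n::finite^'n" and B :: "real^'p::finite^'n" and C :: "real^'n^'q::finite"
    and K :: "real^'n^'p" and L :: "real^'q^'n" and D :: "real^'N::finite^'N"
    and x v :: "nat \<Rightarrow> 'N \<Rightarrow> real^'n"
  assumes rows: "\<And>i. (\<Sum>j\<in>UNIV. D $ i $ j) = 1"
    and dyn_x: "\<forall>k i. x (Suc k) i = A *v x k i + B *v (K *v v k i)"
    and dyn_v: "\<forall>k i. v (Suc k) i = (A + B ** K) *v v k i
        + L *v ((\<Sum>j\<in>UNIV. D $ i $ j *\<^sub>R (C *v (v k i - v k j)))
                - (\<Sum>j\<in>UNIV. D $ i $ j *\<^sub>R (C *v x k i - C *v x k j)))"
  shows "cvec (v (Suc k) i - x (Suc k) i) = cmat A *v cvec (v k i - x k i)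
     + (cmat L ** cmat C) *v (cvec (v k i - x k i) - (\<Sum>j\<in>UNIV. cmat D $ i $ j *s cvec (v k j - x k j)))"
proof -
  define e where "e j = v k j - x k j" for j
  have innovation: "(\<Sum>j\<in>UNIV. D $ i $ j *\<^sub>R (C *v (v k i - v k j)))
      - (\<Sum>j\<in>UNIV. D $ i $ j *\<^sub>R (C *v x k i - C *v x k j))
      = (\<Sum>j\<in>UNIV. D $ i $ j *\<^sub>R (C *v (e i - e j)))"
    unfolding sum_subtractf[symmetric] e_def
    by (rule sum.cong) (simp_all add: matrix_vector_mult_diff_distrib algebra_simps)
  have "v (Suc k) i - x (Suc k) i = A *v e i + L *v (\<Sum>j\<in>UNIV. D $ i $ j *\<^sub>R (C *v (e i - e j)))"
    unfolding dyn_x[rule_format] dyn_v[rule_format] innovation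
    by (simp add: e_def matrix_vector_mult_add_rdistrib matrix_vector_mul_assoc[symmetric]
        matrix_vector_mult_diff_distrib algebra_simps)
  then have "cvec (v (Suc k) i - x (Suc k) i)
      = cmat A *v cvec (e i) + cmat L *v (\<Sum>j\<in>UNIV. cmat D $ i $ j *s (cmat C *v (cvec (e i) - cvec (e j))))"
    by (simp add: cvec_add cvec_mv cvec_sum cvec_scaleR cvec_diff cmat_def)
  also have "(\<Sum>j\<in>UNIV. cmat D $ i $ j *s (cmat C *v (cvec (e i) - cvec (e j))))
      = cmat C *v (\<Sum>j\<in>UNIV. cmat D $ i $ j *s (cvec (e i) - cvec (e j)))"
    by (simp only: matrix_vector_sum vector_scalar_commute)
  also have "(\<Sum>j\<in>UNIV. cmat D $ i $ j *s (cvec (e i) - cvec (e j)))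
      = cvec (e i) - (\<Sum>j\<in>UNIV. cmat D $ i $ j *s cvec (e j))"
    using rows[of i] unfolding cmat_def
    by (simp add: vector_ssub_ldistrib sum_subtractf smult_sum_left[symmetric] flip: of_real_sum)
  finally show ?thesis by (simp add: e_def matrix_vector_mul_assoc)
qed

lemma relative_state_dynamics:
  fixes A :: "real^'n::finite^'n" and B :: "real^'p::finite^'n" and K :: "real^'n^'p"
    and x v :: "nat \<Rightarrow> 'N \<Rightarrow> real^'n"
  assumes dyn_x: "\<forall>k i. x (Suc k) i = A *v x k i + B *v (K *v v k i)"
  shows "cvec (x (Suc k) i - x (Suc k) j) = cmat (A + B ** K) *v cvec (x k i - x k j)
     + cmat (B ** K) *v (cvec (v k i - x k i) - cvec (v k j - x k j))"
proof -
  have "x (Suc k) i - x (Suc k) j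
      = (A + B ** K) *v (x k i - x k j) + (B ** K) *v ((v k i - x k i) - (v k j - x k j))"
    unfolding dyn_x[rule_format]
    by (simp add: matrix_vector_mul_assoc matrix_vector_mult_add_rdistrib
        matrix_vector_mult_diff_distrib algebra_simps)
  then show ?thesis by (simp add: cvec_add cvec_mv cvec_diff)
qed

theorem theorem1:
  fixes A :: "real^'n^'n" and B :: "real^'p^'n" and C :: "real^'n^'q"
    and K :: "real^'n^'p" and L :: "real^'q^'n"
    and E :: "('N::finite \<times> 'N) set" and D :: "real^'N^'N"
    and lam :: "'N \<Rightarrow> complex" and r :: 'N
    and x :: "nat \<Rightarrow> 'N \<Rightarrow> real^'n" and v :: "nat \<Rightarrow> 'N \<Rightarrow> real^'n"
  assumes graph: "has_spanning_tree E" and stoch: "row_stochastic_of E D"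
    and eigs: "charpoly (cmat D) = (\<Prod>i\<in>UNIV. [: - lam i, 1 :])"
    and root1: "lam r = 1" and others: "\<forall>i. i \<noteq> r \<longrightarrow> cmod (lam i) < 1"
    and stabK: "schur_stable (cmat (A + B ** K))"
    and stabL: "\<forall>i. i \<noteq> r \<longrightarrow> schur_stable (cmat A + (\<chi> a b. (1 - lam i) * (cmat L ** cmat C) $ a $ b))"
    and dyn_x: "\<forall>k i. x (Suc k) i = A *v x k i + B *v (K *v v k i)"
    and dyn_v: "\<forall>k i. v (Suc k) i = (A + B ** K) *v v k i
        + L *v ((\<Sum>j\<in>UNIV. D $ i $ j *\<^sub>R (C *v (v k i - v k j)))
                - (\<Sum>j\<in>UNIV. D $ i $ j *\<^sub>R (C *v x k i - C *v x k j)))"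
  shows "\<forall>i j. (\<lambda>k. norm (x k i - x k j)) \<longlonglongrightarrow> 0"
proof (intro allI)
  fix i j
  have rows: "(\<Sum>j\<in>UNIV. D $ i $ j) = 1" for i
    using stoch unfolding row_stochastic_of_def by blast
  have crows: "(\<Sum>j\<in>UNIV. cmat D $ i $ j) = 1" for i
    using rows[of i] unfolding cmat_def by (simp flip: of_real_sum)
  have modes: "lam l \<noteq> 1 \<and> schur_stable (cmat A + (\<chi> a b. (1 - lam l) * (cmat L ** cmat C) $ a $ b))"
    if "l \<noteq> r" for l
    using others[rule_format, OF that] stabL[rule_format, OF that] by auto
  define e where "e k i = cvec (v k i - x k i)" for k i
  have errors: "(\<lambda>k. e k i - e k j) \<longlonglongrightarrow> 0"
    unfolding e_def
    by (rule coupled_errors_synchronise[where e = "\<lambda>k i. cvec (v k i - x k i)",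
          OF crows eigs modes observer_error_dynamics[OF rows dyn_x dyn_v]])
  define dl where "dl k = cvec (x k i - x k j)" for k
  have "dl (Suc k) = cmat (A + B ** K) *v dl k + cmat (B ** K) *v (e k i - e k j)" for k
    unfolding dl_def e_def by (rule relative_state_dynamics[OF dyn_x])
  then have "dl \<longlonglongrightarrow> 0"
    by (rule stable_system_converges[OF stabK _ lim_mv[OF errors]])
  then have "(\<lambda>k. norm (dl k)) \<longlonglongrightarrow> 0" by (rule tendsto_norm_zero)
  then show "(\<lambda>k. norm (x k i - x k j)) \<longlonglongrightarrow> 0" unfolding dl_def norm_cvec .
qed

end
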